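(* Let $\mathcal{A}$ and $\mathcal{B}$ be unital algebras over a field of characteristic zero, let $\mathcal{M}$ be an $(\mathcal{A},\mathcal{B})$-bimodule which is faithful as a left $\mathcal{A}$-module and as a right $\mathcal{B}$-module, and let $\mathcal{T}=Tri(\mathcal{A},\mathcal{M},\mathcal{B})$ be the associated (unital) triangular algebra, with identity $\mathbf{1}$ and center $Z(\mathcal{T})$. Let $n>1$ be an integer and let $\Psi:\mathcal{T}\to\mathcal{T}$ be a linear mapping satisfying \[ 2\Psi(X^n)=X^{n-1}\Psi(X)+\Psi(X)X^{n-1}\quad\text{for all } X\in\mathcal{T}. \] If $\Psi(\mathbf{1})\in Z(\mathcal{T})$, then $\Psi$ is a two-sided centralizer.
   Context: The triangular algebra $Tri(\mathcal{A},\mathcal{M},\mathcal{B})$ is the set of matrices $\begin{bmatrix} a & m\\ 0 & b\end{bmatrix}$ with $a\in\mathcal{A}$, $m\in\mathcal{M}$, $b\in\mathcal{B}$, under the usual matrix operations. Its center is $Z(\mathcal{T})=\{a\oplus b: a\in Z(\mathcal{A}),\ b\in Z(\mathcal{B}),\ am=mb \text{ for all } m\in\mathcal{M}\}$. An additive map $T:\mathcal{T}\to\mathcal{T}$ is a two-sided centralizer if $T(XY)=T(X)Y=XT(Y)$ for all $X,Y\in\mathcal{T}$. *)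

theory Defs
  imports Main
begin

definition unital_algebra_over :: "('k::field \<Rightarrow> 'a::ring_1 \<Rightarrow> 'a) \<Rightarrow> bool" where
  "unital_algebra_over s \<longleftrightarrow>
     (\<forall>c x y. s c (x + y) = s c x + s c y) \<and>
     (\<forall>c d x. s (c + d) x = s c x + s d x) \<and>
     (\<forall>c d x. s (c * d) x = s c (s d x)) \<and>
     (\<forall>x. s 1 x = x) \<and>
     (\<forall>c x y. s c (x * y) = s c x * y) \<and>
     (\<forall>c x y. s c (x * y) = x * s c y)"

definition vector_space_over :: "('k::field \<Rightarrow> 'm::ab_group_add \<Rightarrow> 'm) \<Rightarrow> bool" where
  "vector_space_over s \<longleftrightarrow>
     (\<forall>c x y. s c (x + y) = s c x + s c y) \<and>
     (\<forall>c d x. s (c + d) x = s c x + s d x) \<and>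
     (\<forall>c d x. s (c * d) x = s c (s d x)) \<and>
     (\<forall>x. s 1 x = x)"

definition bimodule :: "('k::field \<Rightarrow> 'a::ring_1 \<Rightarrow> 'a) \<Rightarrow> ('k \<Rightarrow> 'm::ab_group_add \<Rightarrow> 'm) \<Rightarrow>
    ('k \<Rightarrow> 'b::ring_1 \<Rightarrow> 'b) \<Rightarrow> ('a \<Rightarrow> 'm \<Rightarrow> 'm) \<Rightarrow> ('m \<Rightarrow> 'b \<Rightarrow> 'm) \<Rightarrow> bool" where
  "bimodule sA sM sB lA rB \<longleftrightarrow>
     vector_space_over sM \<and>
     (\<forall>a m m'. lA a (m + m') = lA a m + lA a m') \<and>
     (\<forall>a a' m. lA (a + a') m = lA a m + lA a' m) \<and>
     (\<forall>a a' m. lA (a * a') m = lA a (lA a' m)) \<and>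
     (\<forall>m. lA 1 m = m) \<and>
     (\<forall>b m m'. rB (m + m') b = rB m b + rB m' b) \<and>
     (\<forall>b b' m. rB m (b + b') = rB m b + rB m b') \<and>
     (\<forall>b b' m. rB m (b * b') = rB (rB m b) b') \<and>
     (\<forall>m. rB m 1 = m) \<and>
     (\<forall>a m b. rB (lA a m) b = lA a (rB m b)) \<and>
     (\<forall>c a m. lA (sA c a) m = sM c (lA a m)) \<and>
     (\<forall>c a m. lA a (sM c m) = sM c (lA a m)) \<and>
     (\<forall>c b m. rB (sM c m) b = sM c (rB m b)) \<and>
     (\<forall>c b m. rB m (sB c b) = sM c (rB m b))"

definition faithful_left :: "('a::ring_1 \<Rightarrow> 'm::ab_group_add \<Rightarrow> 'm) \<Rightarrow> bool" where
  "faithful_left lA \<longleftrightarrow> (\<forall>a. (\<forall>m. lA a m = 0) \<longrightarrow> a = 0)"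

definition faithful_right :: "('m::ab_group_add \<Rightarrow> 'b::ring_1 \<Rightarrow> 'm) \<Rightarrow> bool" where
  "faithful_right rB \<longleftrightarrow> (\<forall>b. (\<forall>m. rB m b = 0) \<longrightarrow> b = 0)"

text \<open>The triangular algebra Tri(A,M,B): elements [a m; 0 b] represented as triples (a,m,b).\<close>
type_synonym ('a, 'm, 'b) tri = "'a \<times> 'm \<times> 'b"

definition tri_add :: "('a::ring_1, 'm::ab_group_add, 'b::ring_1) tri \<Rightarrow> ('a, 'm, 'b) tri \<Rightarrow> ('a, 'm, 'b) tri" where
  "tri_add X Y = (case X of (a, m, b) \<Rightarrow> case Y of (a', m', b') \<Rightarrow> (a + a', m + m', b + b'))"

definition tri_smult :: "('k \<Rightarrow> 'a \<Rightarrow> 'a) \<Rightarrow> ('k \<Rightarrow> 'm \<Rightarrow> 'm) \<Rightarrow> ('k \<Rightarrow> 'b \<Rightarrow> 'b) \<Rightarrow>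
    'k \<Rightarrow> ('a, 'm, 'b) tri \<Rightarrow> ('a, 'm, 'b) tri" where
  "tri_smult sA sM sB c X = (case X of (a, m, b) \<Rightarrow> (sA c a, sM c m, sB c b))"

definition tri_mul :: "('a::ring_1 \<Rightarrow> 'm::ab_group_add \<Rightarrow> 'm) \<Rightarrow> ('m \<Rightarrow> 'b::ring_1 \<Rightarrow> 'm) \<Rightarrow>
    ('a, 'm, 'b) tri \<Rightarrow> ('a, 'm, 'b) tri \<Rightarrow> ('a, 'm, 'b) tri" where
  "tri_mul lA rB X Y = (case X of (a, m, b) \<Rightarrow> case Y of (a', m', b') \<Rightarrow>
      (a * a', lA a m' + rB m b', b * b'))"

definition tri_one :: "('a::ring_1, 'm::ab_group_add, 'b::ring_1) tri" where
  "tri_one = (1, 0, 1)"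

primrec tri_pow :: "('a::ring_1 \<Rightarrow> 'm::ab_group_add \<Rightarrow> 'm) \<Rightarrow> ('m \<Rightarrow> 'b::ring_1 \<Rightarrow> 'm) \<Rightarrow>
    ('a, 'm, 'b) tri \<Rightarrow> nat \<Rightarrow> ('a, 'm, 'b) tri" where
  "tri_pow lA rB X 0 = tri_one"
| "tri_pow lA rB X (Suc n) = tri_mul lA rB X (tri_pow lA rB X n)"

definition ring_center :: "'a::ring_1 set" where
  "ring_center = {z. \<forall>x. z * x = x * z}"

definition tri_center :: "('a::ring_1 \<Rightarrow> 'm::ab_group_add \<Rightarrow> 'm) \<Rightarrow> ('m \<Rightarrow> 'b::ring_1 \<Rightarrow> 'm) \<Rightarrow>
    ('a, 'm, 'b) tri set" where
  "tri_center lA rB = {(a, 0, b) | a b. a \<in> ring_center \<and> b \<in> ring_center \<and> (\<forall>m. lA a m = rB m b)}"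

definition tri_linear :: "('k \<Rightarrow> 'a \<Rightarrow> 'a) \<Rightarrow> ('k \<Rightarrow> 'm \<Rightarrow> 'm) \<Rightarrow> ('k \<Rightarrow> 'b \<Rightarrow> 'b) \<Rightarrow>
    (('a::ring_1, 'm::ab_group_add, 'b::ring_1) tri \<Rightarrow> ('a, 'm, 'b) tri) \<Rightarrow> bool" where
  "tri_linear sA sM sB \<Psi> \<longleftrightarrow>
     (\<forall>X Y. \<Psi> (tri_add X Y) = tri_add (\<Psi> X) (\<Psi> Y)) \<and>
     (\<forall>c X. \<Psi> (tri_smult sA sM sB c X) = tri_smult sA sM sB c (\<Psi> X))"

definition two_sided_centralizer :: "('a::ring_1 \<Rightarrow> 'm::ab_group_add \<Rightarrow> 'm) \<Rightarrow> ('m \<Rightarrow> 'b::ring_1 \<Rightarrow> 'm) \<Rightarrow>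
    (('a, 'm, 'b) tri \<Rightarrow> ('a, 'm, 'b) tri) \<Rightarrow> bool" where
  "two_sided_centralizer lA rB T \<longleftrightarrow>
     (\<forall>X Y. T (tri_add X Y) = tri_add (T X) (T Y)) \<and>
     (\<forall>X Y. T (tri_mul lA rB X Y) = tri_mul lA rB (T X) Y \<and>
            T (tri_mul lA rB X Y) = tri_mul lA rB X (T Y))"

end

theory Submission
  imports Defs "HOL.Vector_Spaces" "HOL-Library.Product_Plus"
begin

text \<open>
  Put \<open>z = \<Psi>(1)\<close> and \<open>\<Phi>(X) = \<Psi>(X) - z X\<close>. As \<open>z\<close> is central, \<open>\<Phi>\<close> satisfies the same identity
  as \<open>\<Psi>\<close>, and \<open>\<Phi>(1) = 0\<close>. Substituting \<open>1 + tX\<close> for \<open>X\<close> and expanding binomially gives a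
  polynomial identity in the scalar \<open>t\<close>; over an infinite field its coefficient of \<open>t\<close> must
  vanish, and it equals \<open>2(n - 1)\<Phi>(X)\<close>. Hence \<open>\<Psi>(X) = z X\<close>, and left multiplication by a
  central element is a two-sided centralizer. Only the unital algebra structure of \<open>Tri(A, M, B)\<close>
  and the shape of its centre are used.
\<close>

context vector_space
begin

lemma polynomial_diff_factor:
  "(\<Sum>k\<le>Suc d. t ^ k *s c k) - (\<Sum>k\<le>Suc d. a ^ k *s c k)
     = (t - a) *s (\<Sum>i\<le>d. t ^ i *s (\<Sum>k\<in>{Suc i..Suc d}. a ^ (k - Suc i) *s c k))"
proof -
  have "(\<Sum>k\<le>Suc d. t ^ k *s c k) - (\<Sum>k\<le>Suc d. a ^ k *s c k)
      = (\<Sum>k\<le>Suc d. (t ^ k - a ^ k) *s c k)"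
    by (simp add: sum_subtractf scale_left_diff_distrib)
  also have "\<dots> = (\<Sum>k\<le>Suc d. (t - a) *s (\<Sum>i<k. t ^ i *s a ^ (k - Suc i) *s c k))"
    by (intro sum.cong refl)
      (simp add: power_diff_sumr2 scale_sum_left scale_sum_right sum_distrib_left ac_simps)
  also have "\<dots> = (t - a) *s (\<Sum>k\<le>Suc d. \<Sum>i<k. t ^ i *s a ^ (k - Suc i) *s c k)"
    by (simp only: scale_sum_right)
  also have "(\<Sum>k\<le>Suc d. \<Sum>i<k. t ^ i *s a ^ (k - Suc i) *s c k)
      = (\<Sum>i\<le>d. t ^ i *s (\<Sum>k\<in>{Suc i..Suc d}. a ^ (k - Suc i) *s c k))"
    by (simp only: sum.nested_swap' scale_sum_right lessThan_Suc_atMost)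
  finally show ?thesis .
qed

lemma polynomial_coeffs_eq_zero:
  assumes "infinite (UNIV :: 'a set)" and "finite F"
    and "\<And>t. t \<notin> F \<Longrightarrow> (\<Sum>k\<le>d. t ^ k *s c k) = 0" and "k \<le> d"
  shows "c k = 0"
  using assms(2-4)
proof (induction d arbitrary: c F k)
  case 0
  then obtain t where "t \<notin> F" using ex_new_if_finite[OF assms(1)] by blast
  with 0 show ?case by simp
next
  case (Suc d)
  obtain a where a: "a \<notin> F" using ex_new_if_finite[OF assms(1) Suc.prems(1)] by blast
  \<comment> \<open>the coefficients of \<open>(P(t) - P(a)) / (t - a)\<close>, where \<open>P\<close> has coefficients \<open>c\<close>\<close>
  define q where "q i = (\<Sum>k\<in>{Suc i..Suc d}. a ^ (k - Suc i) *s c k)" for i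
  have "(\<Sum>i\<le>d. t ^ i *s q i) = 0" if "t \<notin> insert a F" for t
  proof -
    have "(t - a) *s (\<Sum>i\<le>d. t ^ i *s q i) = 0"
      using polynomial_diff_factor[of t c d a] Suc.prems(2) that a by (simp add: q_def)
    then show ?thesis using that by simp
  qed
  then have "q d = 0" using Suc.IH[of "insert a F" q d] Suc.prems(1) by blast
  then have top: "c (Suc d) = 0" by (simp add: q_def)
  show ?case
  proof (cases "k = Suc d")
    case False
    then have "k \<le> d" using Suc.prems(3) by simp
    moreover have "(\<Sum>k\<le>d. t ^ k *s c k) = 0" if "t \<notin> F" for t
      using Suc.prems(2)[OF that] top by simp
    ultimately show ?thesis using Suc.IH[of F c k] Suc.prems(1) by blast
  qed (use top in simp)
qed

end

locale unital_algebra = vector_space scale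
  for scale :: "'k::field \<Rightarrow> 'v::ab_group_add \<Rightarrow> 'v" (infixr \<open>*s\<close> 75) +
  fixes mul :: "'v \<Rightarrow> 'v \<Rightarrow> 'v" (infixl \<open>\<star>\<close> 70)
    and one :: 'v
  assumes mul_assoc: "(x \<star> y) \<star> z = x \<star> (y \<star> z)"
    and mul_add_left: "(x + y) \<star> z = x \<star> z + y \<star> z"
    and mul_add_right: "x \<star> (y + z) = x \<star> y + x \<star> z"
    and mul_scale_left: "(c *s x) \<star> y = c *s (x \<star> y)"
    and mul_scale_right: "x \<star> (c *s y) = c *s (x \<star> y)"
    and mul_one_left: "one \<star> x = x"
    and mul_one_right: "x \<star> one = x"
begin

lemma mul_zero_left [simp]: "0 \<star> y = 0"
  and mul_diff_left: "(x - x') \<star> y = x \<star> y - x' \<star> y"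
  and mul_sum_left: "sum f A \<star> y = (\<Sum>i\<in>A. f i \<star> y)"
proof -
  interpret additive "\<lambda>x. x \<star> y"
    by standard (rule mul_add_left)
  show "0 \<star> y = 0" by (rule zero)
  show "(x - x') \<star> y = x \<star> y - x' \<star> y" by (rule diff)
  show "sum f A \<star> y = (\<Sum>i\<in>A. f i \<star> y)" by (rule sum)
qed

lemma mul_zero_right [simp]: "x \<star> 0 = 0"
  and mul_diff_right: "x \<star> (y - y') = x \<star> y - x \<star> y'"
  and mul_sum_right: "x \<star> sum f A = (\<Sum>i\<in>A. x \<star> f i)"
proof -
  interpret additive "\<lambda>y. x \<star> y"
    by standard (rule mul_add_right)
  show "x \<star> 0 = 0" by (rule zero)
  show "x \<star> (y - y') = x \<star> y - x \<star> y'" by (rule diff)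
  show "x \<star> sum f A = (\<Sum>i\<in>A. x \<star> f i)" by (rule sum)
qed

primrec pow :: "'v \<Rightarrow> nat \<Rightarrow> 'v" where
  "pow x 0 = one"
| "pow x (Suc n) = x \<star> pow x n"

lemma pow_one_plus_scale:
  "pow (one + t *s x) n = (\<Sum>k\<le>n. (of_nat (n choose k) * t ^ k) *s pow x k)"
proof (induction n)
  case 0
  show ?case by simp
next
  case (Suc n)
  let ?S = "\<lambda>j. \<Sum>k\<le>n. (of_nat (n choose (k + j)) * t ^ Suc k) *s pow x (Suc k)"
  have shift: "(\<Sum>k\<le>n. (of_nat (n choose k) * t ^ k) *s pow x k) = one + ?S 1"
  proof -
    have "(\<Sum>k\<le>n. (of_nat (n choose k) * t ^ k) *s pow x k)
        = (\<Sum>k\<le>Suc n. (of_nat (n choose k) * t ^ k) *s pow x k)"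
      by (simp add: binomial_eq_0)
    also have "\<dots> = one + ?S 1"
      by (subst sum.atMost_Suc_shift) simp
    finally show ?thesis .
  qed
  have "pow (one + t *s x) (Suc n)
      = (\<Sum>k\<le>n. (of_nat (n choose k) * t ^ k) *s pow x k) + ?S 0"
    by (simp add: Suc.IH mul_add_left mul_one_left mul_scale_left mul_sum_right mul_scale_right
        scale_right_distrib sum.distrib ac_simps)
  also have "\<dots> = one + (?S 1 + ?S 0)"
    by (simp only: shift add.assoc)
  also have "?S 1 + ?S 0 = (\<Sum>k\<le>n. (of_nat (Suc n choose Suc k) * t ^ Suc k) *s pow x (Suc k))"
    by (simp add: scale_left_distrib distrib_right sum.distrib add.commute)
  also have "one + \<dots> = (\<Sum>k\<le>Suc n. (of_nat (Suc n choose k) * t ^ k) *s pow x k)"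
    by (subst sum.atMost_Suc_shift) simp
  finally show ?case .
qed

lemma pow_Suc_right: "pow x (Suc n) = pow x n \<star> x"
proof (induction n)
  case 0
  show ?case by (simp add: mul_one_left mul_one_right)
next
  case (Suc n)
  have "pow x (Suc (Suc n)) = x \<star> pow x (Suc n)" by (rule pow.simps(2))
  also have "\<dots> = x \<star> (pow x n \<star> x)" using Suc.IH by (rule arg_cong)
  also have "\<dots> = pow x (Suc n) \<star> x" by (simp add: mul_assoc)
  finally show ?case .
qed

definition central :: "'v \<Rightarrow> bool" where
  "central z \<longleftrightarrow> (\<forall>x. z \<star> x = x \<star> z)"

lemma central_mul_left_commute: "central z \<Longrightarrow> z \<star> (x \<star> y) = x \<star> (z \<star> y)"
  unfolding central_def by (metis mul_assoc)

definition power_centralizer_identity :: "nat \<Rightarrow> ('v \<Rightarrow> 'v) \<Rightarrow> bool" where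
  "power_centralizer_identity n \<Psi> \<longleftrightarrow>
     (\<forall>x. \<Psi> (pow x n) + \<Psi> (pow x n) = pow x (n - 1) \<star> \<Psi> x + \<Psi> x \<star> pow x (n - 1))"

lemma power_centralizer_identity_diff_left_mult:
  assumes "power_centralizer_identity (Suc m) \<Psi>" and "central z"
  shows "power_centralizer_identity (Suc m) (\<lambda>x. \<Psi> x - z \<star> x)"
  unfolding power_centralizer_identity_def
proof
  fix x
  have "pow x m \<star> (z \<star> x) = (z \<star> pow x m) \<star> x"
    using assms(2) by (simp add: central_def mul_assoc)
  also have "\<dots> = z \<star> pow x (Suc m)"
    by (simp only: mul_assoc pow_Suc_right)
  finally have left: "pow x m \<star> (z \<star> x) = z \<star> pow x (Suc m)" .
  have right: "(z \<star> x) \<star> pow x m = z \<star> pow x (Suc m)"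
    by (simp add: mul_assoc)
  have "pow x m \<star> (\<Psi> x - z \<star> x) + (\<Psi> x - z \<star> x) \<star> pow x m
      = (pow x m \<star> \<Psi> x + \<Psi> x \<star> pow x m) - (z \<star> pow x (Suc m) + z \<star> pow x (Suc m))"
    by (simp add: mul_diff_left mul_diff_right left right algebra_simps)
  also have "\<dots> = (\<Psi> (pow x (Suc m)) + \<Psi> (pow x (Suc m))) - (z \<star> pow x (Suc m) + z \<star> pow x (Suc m))"
    using assms(1) by (simp add: power_centralizer_identity_def)
  finally show "\<Psi> (pow x (Suc m)) - z \<star> pow x (Suc m) + (\<Psi> (pow x (Suc m)) - z \<star> pow x (Suc m))
      = pow x (Suc m - 1) \<star> (\<Psi> x - z \<star> x) + (\<Psi> x - z \<star> x) \<star> pow x (Suc m - 1)"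
    by (simp add: algebra_simps)
qed

text \<open>The identity at \<open>one + t *s x\<close>, divided by \<open>t\<close>.\<close>

lemma power_centralizer_identity_one_plus_scale:
  assumes lin: "Vector_Spaces.linear (*s) (*s) \<Phi>" and unit: "\<Phi> one = 0"
    and identity: "power_centralizer_identity (Suc m) \<Phi>" and "t \<noteq> 0"
  shows "(\<Sum>k\<le>m. t ^ k *s
            (of_nat (Suc m choose Suc k) *s (\<Phi> (pow x (Suc k)) + \<Phi> (pow x (Suc k)))
             - of_nat (m choose k) *s (pow x k \<star> \<Phi> x + \<Phi> x \<star> pow x k))) = 0"
    (is "(\<Sum>k\<le>m. t ^ k *s ?w k) = 0")
proof -
  interpret \<Phi>: linear "(*s)" "(*s)" \<Phi> by (fact lin)
  let ?y = "one + t *s x"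
  have "\<Phi> (pow ?y (Suc m)) = (\<Sum>k\<le>Suc m. (of_nat (Suc m choose k) * t ^ k) *s \<Phi> (pow x k))"
    by (simp only: pow_one_plus_scale \<Phi>.sum \<Phi>.scale)
  also have "\<dots> = (\<Sum>k\<le>m. (of_nat (Suc m choose Suc k) * t ^ Suc k) *s \<Phi> (pow x (Suc k)))"
    by (simp only: sum.atMost_Suc_shift) (simp add: unit)
  finally have lhs: "\<Phi> (pow ?y (Suc m)) = \<dots>" .
  have "\<Phi> ?y = t *s \<Phi> x"
    by (simp add: \<Phi>.add \<Phi>.scale unit)
  then have rhs: "pow ?y m \<star> \<Phi> ?y + \<Phi> ?y \<star> pow ?y m
      = (\<Sum>k\<le>m. (of_nat (m choose k) * t ^ Suc k) *s (pow x k \<star> \<Phi> x + \<Phi> x \<star> pow x k))"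
    by (simp add: pow_one_plus_scale mul_sum_left mul_sum_right mul_scale_left mul_scale_right
        scale_right_distrib scale_sum_right sum.distrib ac_simps)
  have "t *s (\<Sum>k\<le>m. t ^ k *s ?w k)
      = (\<Phi> (pow ?y (Suc m)) + \<Phi> (pow ?y (Suc m))) - (pow ?y m \<star> \<Phi> ?y + \<Phi> ?y \<star> pow ?y m)"
    unfolding lhs rhs
    by (simp add: scale_sum_right scale_right_diff_distrib scale_right_distrib
        sum_subtractf sum.distrib ac_simps)
  also have "\<dots> = 0"
    using identity by (simp add: power_centralizer_identity_def)
  finally show ?thesis
    using \<open>t \<noteq> 0\<close> by simp
qed

lemma power_centralizer_identity_imp_zero:
  assumes lin: "Vector_Spaces.linear (*s) (*s) \<Phi>" and unit: "\<Phi> one = 0"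
    and identity: "power_centralizer_identity n \<Phi>"
    and inf: "infinite (UNIV :: 'k set)" and char: "of_nat (2 * (n - 1)) \<noteq> (0 :: 'k)"
  shows "\<Phi> x = 0"
proof -
  obtain m where n: "n = Suc m"
    using char by (cases n) auto
  define w where "w k = of_nat (Suc m choose Suc k) *s (\<Phi> (pow x (Suc k)) + \<Phi> (pow x (Suc k)))
      - of_nat (m choose k) *s (pow x k \<star> \<Phi> x + \<Phi> x \<star> pow x k)" for k
  have "(\<Sum>k\<le>m. t ^ k *s w k) = 0" if "t \<notin> {0}" for t
    unfolding w_def using that
    by (intro power_centralizer_identity_one_plus_scale[OF lin unit identity[unfolded n]]) simp
  then have "w 0 = 0"
    using polynomial_coeffs_eq_zero[OF inf, of "{0}"] by blast
  have "w 0 = of_nat (Suc m) *s (\<Phi> x + \<Phi> x) - (\<Phi> x + \<Phi> x)"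
    by (simp add: w_def mul_one_left mul_one_right)
  also have "\<dots> = of_nat m *s (\<Phi> x + \<Phi> x)"
    by (simp add: scale_left_distrib)
  also have "\<dots> = of_nat (2 * m) *s \<Phi> x"
    by (simp only: scale_right_distrib mult_2 of_nat_add scale_left_distrib)
  finally have "of_nat (2 * m) *s \<Phi> x = 0"
    using \<open>w 0 = 0\<close> by simp
  then show ?thesis
    using char n by simp
qed

lemma power_centralizer_identity_imp_left_mult:
  assumes lin: "Vector_Spaces.linear (*s) (*s) \<Psi>" and "central (\<Psi> one)"
    and identity: "power_centralizer_identity n \<Psi>"
    and "infinite (UNIV :: 'k set)" and char: "of_nat (2 * (n - 1)) \<noteq> (0 :: 'k)"
  shows "\<Psi> x = \<Psi> one \<star> x"
proof -
  interpret \<Psi>: linear "(*s)" "(*s)" \<Psi> by (fact lin)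
  obtain m where n: "n = Suc m" using char by (cases n) auto
  let ?\<Phi> = "\<lambda>x. \<Psi> x - \<Psi> one \<star> x"
  have "Vector_Spaces.linear (*s) (*s) ?\<Phi>"
    by (simp add: linear_iff vector_space_axioms \<Psi>.add \<Psi>.scale mul_add_right mul_scale_right
        scale_right_diff_distrib)
  moreover have "?\<Phi> one = 0"
    by (simp add: mul_one_right)
  moreover have "power_centralizer_identity n ?\<Phi>"
    using identity assms(2) unfolding n by (rule power_centralizer_identity_diff_left_mult)
  ultimately have "?\<Phi> x = 0"
    using power_centralizer_identity_imp_zero[where \<Phi> = ?\<Phi>] assms(4) char by blast
  then show ?thesis by simp
qed

end

lemma tri_add_eq_plus: "tri_add X Y = X + Y"
  by (cases X; cases Y) (simp add: tri_add_def)

lemma bimodule_action_zero: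
  assumes "bimodule sA sM sB lA rB"
  shows "lA a 0 = 0" and "rB 0 b = 0"
  using assms unfolding bimodule_def by (metis add_cancel_right_right)+

lemma tri_center_mul_commute:
  assumes "bimodule sA sM sB lA rB" and "z \<in> tri_center lA rB"
  shows "tri_mul lA rB z X = tri_mul lA rB X z"
  using assms(2) unfolding tri_center_def ring_center_def
  by (cases X) (auto simp: tri_mul_def bimodule_action_zero[OF assms(1)])

lemma vector_space_tri_smult:
  fixes sA :: "'k::field \<Rightarrow> 'a::ring_1 \<Rightarrow> 'a" and sB :: "'k \<Rightarrow> 'b::ring_1 \<Rightarrow> 'b"
    and sM :: "'k \<Rightarrow> 'm::ab_group_add \<Rightarrow> 'm"
  assumes "vector_space sA" and "vector_space sM" and "vector_space sB"
  shows "vector_space (tri_smult sA sM sB)"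
proof -
  interpret A: vector_space sA by fact
  interpret M: vector_space sM by fact
  interpret B: vector_space sB by fact
  show ?thesis
  proof
    fix c d :: 'k and X Y :: "('a, 'm, 'b) tri"
    show "tri_smult sA sM sB c (X + Y) = tri_smult sA sM sB c X + tri_smult sA sM sB c Y"
      by (cases X; cases Y)
        (simp add: tri_smult_def A.scale_right_distrib B.scale_right_distrib M.scale_right_distrib)
    show "tri_smult sA sM sB (c + d) X = tri_smult sA sM sB c X + tri_smult sA sM sB d X"
      by (cases X) (simp add: tri_smult_def A.scale_left_distrib B.scale_left_distrib M.scale_left_distrib)
    show "tri_smult sA sM sB c (tri_smult sA sM sB d X) = tri_smult sA sM sB (c * d) X"
      by (cases X) (simp add: tri_smult_def)
    show "tri_smult sA sM sB 1 X = X"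
      by (cases X) (simp add: tri_smult_def)
  qed
qed

lemma unital_algebra_tri:
  fixes sA :: "'k::field \<Rightarrow> 'a::ring_1 \<Rightarrow> 'a" and sB :: "'k \<Rightarrow> 'b::ring_1 \<Rightarrow> 'b"
    and sM :: "'k \<Rightarrow> 'm::ab_group_add \<Rightarrow> 'm"
  assumes A: "unital_algebra_over sA" and B: "unital_algebra_over sB"
    and M: "bimodule sA sM sB lA rB"
  shows "unital_algebra (tri_smult sA sM sB) (tri_mul lA rB) tri_one"
proof -
  have vs_A: "vector_space sA" and vs_B: "vector_space sB"
    using A B by (simp_all add: unital_algebra_over_def vector_space_def)
  interpret M: vector_space sM
    using M by (simp add: bimodule_def vector_space_over_def vector_space_def)
  have lA_add_right: "lA a (m + m') = lA a m + lA a m'"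
    and lA_add_left: "lA (a + a') m = lA a m + lA a' m"
    and lA_mult: "lA (a * a') m = lA a (lA a' m)"
    and lA_one: "lA 1 m = m"
    and rB_add_left: "rB (m + m') b = rB m b + rB m' b"
    and rB_add_right: "rB m (b + b') = rB m b + rB m b'"
    and rB_mult: "rB m (b * b') = rB (rB m b) b'"
    and rB_one: "rB m 1 = m"
    and lA_rB_commute: "rB (lA a m) b = lA a (rB m b)"
    and lA_sA: "lA (sA c a) m = sM c (lA a m)"
    and lA_sM: "lA a (sM c m) = sM c (lA a m)"
    and rB_sM: "rB (sM c m) b = sM c (rB m b)"
    and rB_sB: "rB m (sB c b) = sM c (rB m b)"
    for a a' b b' m m' c
    using M by (simp_all add: bimodule_def)
  have sA_mult_left: "sA c (a * a') = sA c a * a'" and sA_mult_right: "sA c (a * a') = a * sA c a'"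
    for a a' c
    using A unfolding unital_algebra_over_def by blast+
  have sB_mult_left: "sB c (b * b') = sB c b * b'" and sB_mult_right: "sB c (b * b') = b * sB c b'"
    for b b' c
    using B unfolding unital_algebra_over_def by blast+
  show ?thesis
  proof (intro unital_algebra.intro unital_algebra_axioms.intro)
    show "vector_space (tri_smult sA sM sB)"
      using vs_A M.vector_space_axioms vs_B by (rule vector_space_tri_smult)
  next
    fix c :: 'k and X Y Z :: "('a, 'm, 'b) tri"
    show "tri_mul lA rB (tri_mul lA rB X Y) Z = tri_mul lA rB X (tri_mul lA rB Y Z)"
      by (cases X; cases Y; cases Z)
        (simp add: tri_mul_def mult.assoc add.assoc lA_add_right rB_add_left lA_mult rB_mult lA_rB_commute)
    show "tri_mul lA rB (X + Y) Z = tri_mul lA rB X Z + tri_mul lA rB Y Z"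
      by (cases X; cases Y; cases Z) (simp add: tri_mul_def distrib_right lA_add_left rB_add_left ac_simps)
    show "tri_mul lA rB X (Y + Z) = tri_mul lA rB X Y + tri_mul lA rB X Z"
      by (cases X; cases Y; cases Z) (simp add: tri_mul_def distrib_left lA_add_right rB_add_right ac_simps)
    show "tri_mul lA rB (tri_smult sA sM sB c X) Y = tri_smult sA sM sB c (tri_mul lA rB X Y)"
      by (cases X; cases Y) (simp add: tri_mul_def tri_smult_def sA_mult_left sB_mult_left lA_sA rB_sM
          M.scale_right_distrib)
    show "tri_mul lA rB X (tri_smult sA sM sB c Y) = tri_smult sA sM sB c (tri_mul lA rB X Y)"
      by (cases X; cases Y) (simp add: tri_mul_def tri_smult_def sA_mult_right sB_mult_right lA_sM rB_sB
          M.scale_right_distrib)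
    show "tri_mul lA rB tri_one X = X"
      by (cases X) (simp add: tri_mul_def tri_one_def lA_one bimodule_action_zero[OF M])
    show "tri_mul lA rB X tri_one = X"
      by (cases X) (simp add: tri_mul_def tri_one_def rB_one bimodule_action_zero[OF M])
  qed
qed

theorem corollary2p5:
  fixes sA :: "'k::field_char_0 \<Rightarrow> 'a::ring_1 \<Rightarrow> 'a"
    and sB :: "'k \<Rightarrow> 'b::ring_1 \<Rightarrow> 'b"
    and sM :: "'k \<Rightarrow> 'm::ab_group_add \<Rightarrow> 'm"
    and lA :: "'a \<Rightarrow> 'm \<Rightarrow> 'm"
    and rB :: "'m \<Rightarrow> 'b \<Rightarrow> 'm"
    and \<Psi> :: "('a, 'm, 'b) tri \<Rightarrow> ('a, 'm, 'b) tri"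
    and n :: nat
  assumes "unital_algebra_over sA"
    and "unital_algebra_over sB"
    and "bimodule sA sM sB lA rB"
    and "faithful_left lA"
    and "faithful_right rB"
    and "n > 1"
    and "tri_linear sA sM sB \<Psi>"
    and "\<forall>X. tri_add (\<Psi> (tri_pow lA rB X n)) (\<Psi> (tri_pow lA rB X n)) =
             tri_add (tri_mul lA rB (tri_pow lA rB X (n - 1)) (\<Psi> X))
                     (tri_mul lA rB (\<Psi> X) (tri_pow lA rB X (n - 1)))"
    and "\<Psi> tri_one \<in> tri_center lA rB"
  shows "two_sided_centralizer lA rB \<Psi>"
proof -
  interpret T: unital_algebra "tri_smult sA sM sB" "tri_mul lA rB" tri_one
    using assms(1-3) by (rule unital_algebra_tri)
  have pow_eq: "tri_pow lA rB X k = T.pow X k" for X k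
    by (induction k) simp_all
  have "Vector_Spaces.linear (tri_smult sA sM sB) (tri_smult sA sM sB) \<Psi>"
    using assms(7) by (simp add: linear_iff T.vector_space_axioms tri_linear_def tri_add_eq_plus)
  moreover have central: "T.central (\<Psi> tri_one)"
    using tri_center_mul_commute[OF assms(3,9)] by (simp add: T.central_def)
  moreover have "T.power_centralizer_identity n \<Psi>"
    using assms(8) by (simp add: T.power_centralizer_identity_def tri_add_eq_plus pow_eq)
  moreover have "of_nat (2 * (n - 1)) \<noteq> (0 :: 'k)"
    using assms(6) by simp
  ultimately have left_mult: "\<Psi> X = tri_mul lA rB (\<Psi> tri_one) X" for X
    using T.power_centralizer_identity_imp_left_mult infinite_UNIV_char_0 by blast
  have "\<Psi> (tri_mul lA rB X Y) = tri_mul lA rB (\<Psi> X) Y" for X Y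
    by (simp only: left_mult[of X] left_mult[of "tri_mul lA rB X Y"] T.mul_assoc)
  moreover have "\<Psi> (tri_mul lA rB X Y) = tri_mul lA rB X (\<Psi> Y)" for X Y
    by (simp only: left_mult[of Y] left_mult[of "tri_mul lA rB X Y"] T.central_mul_left_commute[OF central])
  ultimately show ?thesis
    using assms(7) unfolding two_sided_centralizer_def tri_linear_def by blast
qed

end
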